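(* For every $\alpha\in[m,M]$ (where $m=\inf_{n\ge1}b_n$, $M=\sup_{n\ge1}b_n$), the level set $S_\alpha=\{x>0:\lambda(x)=\alpha\}$ has Lebesgue measure zero.
   Context: Fix integers $p\ge 3$ and $2\le s<p$, and a set $A\subset\{0,1,\dots,p-1\}$ with $\#A=s$. Let $h:\{0,1,\dots,s-1\}\to A$ be the unique strictly increasing bijection. For a positive integer $n$ with base-$s$ expansion $n=\sum_{i=0}^k\varepsilon_i s^i$ ($\varepsilon_i\in\{0,\dots,s-1\}$, $\varepsilon_k\ne 0$), put $a_n=\sum_{i=0}^k h(\varepsilon_i)p^i$, and put $a_0=h(0)$. Let $b_n=a_n/n^{\log_s p}$ for $n\ge1$. For real $x\ge0$ let $a(x)=a_{\lfloor x\rfloor}$, and for $x>0$ let $\lambda(x)=\lim_{k\to\infty}\frac{a(s^kx)}{(s^kx)^{\log_s p}}$ (this limit exists). *)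

theory Defs
  imports "HOL-Analysis.Analysis"
begin

definition digit_map :: "nat set \<Rightarrow> nat \<Rightarrow> nat" where
  "digit_map A i = sorted_list_of_set A ! i"

text \<open>a_n: replace base-s digits eps_i of n by h(eps_i) and read in base p; a_0 = h 0.\<close>
function a_seq :: "nat \<Rightarrow> nat \<Rightarrow> nat set \<Rightarrow> nat \<Rightarrow> nat" where
  "a_seq p s A n =
     (if n < s \<or> s < 2 then digit_map A n
      else digit_map A (n mod s) + p * a_seq p s A (n div s))"
  by auto
termination
  by (relation "Wellfounded.measure (\<lambda>(p, s, A, n). n)") auto

definition b_seq :: "nat \<Rightarrow> nat \<Rightarrow> nat set \<Rightarrow> nat \<Rightarrow> real" where
  "b_seq p s A n = real (a_seq p s A n) / (real n) powr (log (real s) (real p))"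

definition a_fun :: "nat \<Rightarrow> nat \<Rightarrow> nat set \<Rightarrow> real \<Rightarrow> real" where
  "a_fun p s A x = real (a_seq p s A (nat \<lfloor>x\<rfloor>))"

definition lambda_fun :: "nat \<Rightarrow> nat \<Rightarrow> nat set \<Rightarrow> real \<Rightarrow> real" where
  "lambda_fun p s A x =
     lim (\<lambda>k. a_fun p s A (real s ^ k * x) / (real s ^ k * x) powr (log (real s) (real p)))"

end

theory Submission
  imports Defs
begin

text \<open>Write \<gamma> = log_s p \<ge> 1 and t_k(x) = a(\<lfloor>s^k x\<rfloor>) / p^k. Appending a base-s digit to
  \<lfloor>s^k x\<rfloor> appends a base-p digit below p to its image under a, so t_k(x) increases to a limit
  L(x) \<le> t_k(x) + p^-k, and \<lambda>(x) = L(x) / x^\<gamma>. Hence for x \<in> [1,s) with \<lambda>(x) = \<alpha> (which forces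
  \<alpha> > 0) the number x^\<gamma> lies in an interval of length p^-k/\<alpha> determined by \<lfloor>s^k x\<rfloor>, one of at
  most s^(k+1) values; as \<gamma> \<ge> 1 the same holds for x itself. This covers the part of the level set
  in [1,s) by sets of total length s (s/p)^k/\<alpha> \<longrightarrow> 0. Since \<lambda>(s x) = \<lambda>(x), the whole level set is a
  countable union of scaled copies of that part.\<close>

lemma power_powr_log:
  fixes a b :: real
  assumes "1 < b" "0 < a"
  shows "(b ^ k) powr log b a = a ^ k"
  using assms by (simp add: powr_realpow[symmetric] powr_powr mult.commute[of "real k"] powr_def log_def)

lemma nat_floor_mult_div:
  assumes "0 < s" "0 \<le> y"
  shows "nat \<lfloor>real s * y\<rfloor> div s = nat \<lfloor>y\<rfloor>"
proof (rule div_nat_eqI)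
  have "real (s * nat \<lfloor>y\<rfloor>) \<le> real s * y"
    using assms by (simp add: mult_left_mono)
  then show "s * nat \<lfloor>y\<rfloor> \<le> nat \<lfloor>real s * y\<rfloor>"
    by (rule le_nat_floor)
  have "y < real (Suc (nat \<lfloor>y\<rfloor>))"
    using assms by linarith
  then have "real s * y < real (s * Suc (nat \<lfloor>y\<rfloor>))"
    using assms by (simp only: of_nat_mult mult_strict_left_mono of_nat_0_less_iff)
  then show "nat \<lfloor>real s * y\<rfloor> < s * Suc (nat \<lfloor>y\<rfloor>)"
    using assms by (simp add: nat_less_iff floor_less_iff)
qed

lemma diff_le_powr_diff:
  fixes u x c :: real
  assumes "1 \<le> u" "u \<le> x" "1 \<le> c"
  shows "x - u \<le> x powr c - u powr c"
proof -
  define r where "r = x / u"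
  have "1 \<le> r" and x_eq: "x = u * r"
    using assms unfolding r_def by auto
  have "x - u = u * (r - 1)"
    using x_eq by (simp add: algebra_simps)
  also have "\<dots> \<le> u powr c * (r powr c - 1)"
    using powr_mono[OF assms(3), of u] powr_mono[OF assms(3), of r] \<open>1 \<le> r\<close> assms(1)
    by (intro mult_mono) auto
  also have "\<dots> = x powr c - u powr c"
    using x_eq assms(1) \<open>1 \<le> r\<close> by (simp add: powr_mult algebra_simps)
  finally show ?thesis .
qed

lemma measure_UN_intervals_le:
  fixes u :: "'a \<Rightarrow> real" and \<delta> :: real
  assumes "finite N" "0 \<le> \<delta>"
  shows "measure lebesgue (\<Union>n\<in>N. {u n .. u n + \<delta>}) \<le> card N * \<delta>"
proof -
  have "measure lebesgue (\<Union>n\<in>N. {u n .. u n + \<delta>})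
      \<le> (\<Sum>n\<in>N. measure lebesgue {u n .. u n + \<delta>})"
    using assms(1) by (intro measure_UNION_le) auto
  also have "\<dots> = card N * \<delta>"
    using assms(2) by simp
  finally show ?thesis .
qed

locale digit_setting =
  fixes p s :: nat and A :: "nat set"
  assumes s_ge_2: "2 \<le> s" and s_less_p: "s < p"
    and A_subset: "A \<subseteq> {0..<p}" and card_A: "card A = s"
begin

abbreviation \<gamma> :: real where "\<gamma> \<equiv> log (real s) (real p)"

lemma gamma_ge_1: "1 \<le> \<gamma>"
  using s_ge_2 s_less_p by simp

lemma finite_A: "finite A"
  using A_subset finite_subset by blast

lemma digit_map_less: "i < s \<Longrightarrow> digit_map A i < p"
  using nth_mem[of i "sorted_list_of_set A"] finite_A A_subset card_A
  unfolding digit_map_def by auto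

lemma digit_map_strict_mono: "i < j \<Longrightarrow> j < s \<Longrightarrow> digit_map A i < digit_map A j"
  using sorted_wrt_nth_less[OF strict_sorted_list_of_set[of A], of i j] card_A finite_A
  unfolding digit_map_def by simp

lemma a_seq_small: "n < s \<Longrightarrow> a_seq p s A n = digit_map A n"
  by (subst a_seq.simps) simp

lemma a_seq_step: "s \<le> n \<Longrightarrow> a_seq p s A n = digit_map A (n mod s) + p * a_seq p s A (n div s)"
  by (subst a_seq.simps) (use s_ge_2 in auto)

lemma a_seq_pos: "1 \<le> n \<Longrightarrow> 1 \<le> a_seq p s A n"
proof (induction n rule: less_induct)
  case (less n)
  show ?case
  proof (cases "n < s")
    case True
    then show ?thesis
      using less.prems digit_map_strict_mono[of 0 n] a_seq_small by simp
  next
    case False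
    then have "1 \<le> n div s" "n div s < n"
      using s_ge_2 less.prems by (auto simp: Suc_le_eq div_greater_zero_iff)
    then have "1 \<le> a_seq p s A (n div s)"
      using less.IH by blast
    then show ?thesis
      using False a_seq_step[of n] s_less_p by (simp add: Suc_le_eq)
  qed
qed

definition lead_digits :: "real \<Rightarrow> nat \<Rightarrow> nat" where
  "lead_digits x k = nat \<lfloor>real s ^ k * x\<rfloor>"

definition trunc_val :: "real \<Rightarrow> nat \<Rightarrow> real" where
  "trunc_val x k = real (a_seq p s A (lead_digits x k)) / real p ^ k"

lemma lead_digits_ge: "1 \<le> x \<Longrightarrow> s ^ k \<le> lead_digits x k"
  unfolding lead_digits_def
  by (rule le_nat_floor) (simp add: mult_left_mono[of 1 x, simplified])

lemma lead_digits_less: "0 \<le> x \<Longrightarrow> x < real s \<Longrightarrow> lead_digits x k < s ^ Suc k"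
proof -
  assume "0 \<le> x" "x < real s"
  then have "real s ^ k * x < real (s ^ Suc k)"
    using s_ge_2 by (simp add: mult_strict_left_mono)
  then show ?thesis
    unfolding lead_digits_def using \<open>0 \<le> x\<close> by (simp add: nat_less_iff floor_less_iff)
qed

lemma lead_digits_Suc_div: "0 \<le> x \<Longrightarrow> lead_digits x (Suc k) div s = lead_digits x k"
  unfolding lead_digits_def using nat_floor_mult_div[of s "real s ^ k * x"] s_ge_2
  by (simp add: mult.assoc)

lemma trunc_val_Suc:
  assumes "1 \<le> x"
  shows "trunc_val x (Suc k) = trunc_val x k + digit_map A (lead_digits x (Suc k) mod s) / real p ^ Suc k"
proof -
  have "s \<le> s ^ Suc k"
    using s_ge_2 by simp
  also have "\<dots> \<le> lead_digits x (Suc k)"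
    using lead_digits_ge[OF assms] .
  finally have "a_seq p s A (lead_digits x (Suc k))
      = digit_map A (lead_digits x (Suc k) mod s) + p * a_seq p s A (lead_digits x k)"
    using a_seq_step lead_digits_Suc_div assms by simp
  then show ?thesis
    unfolding trunc_val_def using s_less_p by (simp add: add_divide_distrib)
qed

lemma trunc_val_nested:
  assumes "1 \<le> x"
  shows "trunc_val x k \<le> trunc_val x (Suc k)"
    and "trunc_val x (Suc k) + 1 / real p ^ Suc k \<le> trunc_val x k + 1 / real p ^ k"
proof -
  define d where "d = digit_map A (lead_digits x (Suc k) mod s)"
  have "d < p"
    unfolding d_def using digit_map_less s_ge_2 by simp
  then have "(real d + 1) / real p ^ Suc k \<le> real p / real p ^ Suc k"
    by (intro divide_right_mono) auto
  then have "real d / real p ^ Suc k + 1 / real p ^ Suc k \<le> 1 / real p ^ k"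
    using s_less_p by (simp add: add_divide_distrib)
  moreover have "trunc_val x (Suc k) = trunc_val x k + real d / real p ^ Suc k"
    using trunc_val_Suc[OF assms] unfolding d_def by simp
  ultimately show "trunc_val x k \<le> trunc_val x (Suc k)"
    and "trunc_val x (Suc k) + 1 / real p ^ Suc k \<le> trunc_val x k + 1 / real p ^ k"
    by simp_all
qed

lemma trunc_val_limit:
  assumes "1 \<le> x"
  obtains L where "trunc_val x \<longlonglongrightarrow> L"
    and "\<And>k. trunc_val x k \<le> L \<and> L \<le> trunc_val x k + 1 / real p ^ k"
proof -
  have "(\<lambda>k. 1 / real p ^ k) \<longlonglongrightarrow> 0"
    using s_less_p s_ge_2 by (intro LIMSEQ_divide_realpow_zero) auto
  then have "(\<lambda>k. trunc_val x k - (trunc_val x k + 1 / real p ^ k)) \<longlonglongrightarrow> 0"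
    using tendsto_minus by fastforce
  then show ?thesis
    using nested_sequence_unique[of "trunc_val x" "\<lambda>k. trunc_val x k + 1 / real p ^ k"]
      trunc_val_nested[OF assms] that by auto
qed

lemma lambda_fun_eq_lim:
  assumes "0 < x" and "trunc_val x \<longlonglongrightarrow> L"
  shows "lambda_fun p s A x = L / x powr \<gamma>"
proof -
  have "(real s ^ k * x) powr \<gamma> = real p ^ k * x powr \<gamma>" for k
    using assms(1) s_ge_2 s_less_p by (simp add: powr_mult power_powr_log)
  then have "lambda_fun p s A x = lim (\<lambda>k. trunc_val x k / x powr \<gamma>)"
    unfolding lambda_fun_def a_fun_def trunc_val_def lead_digits_def by simp
  then show ?thesis
    using tendsto_divide[OF assms(2) tendsto_const, of "x powr \<gamma>"] assms(1) by (simp add: limI)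
qed

lemma lambda_fun_bounds:
  assumes "1 \<le> x"
  shows "trunc_val x k \<le> lambda_fun p s A x * x powr \<gamma>
    \<and> lambda_fun p s A x * x powr \<gamma> \<le> trunc_val x k + 1 / real p ^ k"
proof -
  obtain L where "trunc_val x \<longlonglongrightarrow> L" "trunc_val x k \<le> L \<and> L \<le> trunc_val x k + 1 / real p ^ k"
    using trunc_val_limit[OF assms] by metis
  moreover have "lambda_fun p s A x * x powr \<gamma> = L"
    using lambda_fun_eq_lim[OF _ \<open>trunc_val x \<longlonglongrightarrow> L\<close>] assms by simp
  ultimately show ?thesis
    by simp
qed

lemma lambda_fun_pos:
  assumes "1 \<le> x"
  shows "0 < lambda_fun p s A x"
proof -
  have "1 \<le> a_seq p s A (lead_digits x 0)"
    using a_seq_pos lead_digits_ge[OF assms, of 0] by simp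
  then have "0 < lambda_fun p s A x * x powr \<gamma>"
    using lambda_fun_bounds[OF assms, of 0] unfolding trunc_val_def by simp
  then show ?thesis
    using assms by (simp add: zero_less_mult_iff)
qed

lemma lambda_fun_scale: "lambda_fun p s A (real s * x) = lambda_fun p s A x"
proof -
  define F where "F k = a_fun p s A (real s ^ k * x) / (real s ^ k * x) powr \<gamma>" for k
  have "lambda_fun p s A (real s * x) = lim (\<lambda>k. F (Suc k))"
    unfolding lambda_fun_def F_def by (simp add: mult.assoc mult.left_commute)
  also have "\<dots> = lim F"
    unfolding lim_def by (simp add: filterlim_sequentially_Suc)
  finally show ?thesis
    unfolding lambda_fun_def F_def .
qed

lemma lambda_fun_scale_power: "lambda_fun p s A (real s ^ m * x) = lambda_fun p s A x"
  by (induction m) (simp_all add: mult.assoc lambda_fun_scale)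

lemma lambda_fun_scale_powr_int: "lambda_fun p s A (real s powr of_int j * x) = lambda_fun p s A x"
proof (cases "0 \<le> j")
  case True
  then show ?thesis
    using s_ge_2 lambda_fun_scale_power[of "nat j" x] by (simp add: powr_realpow[symmetric])
next
  case False
  have "x = real s ^ nat (- j) * (real s powr of_int j * x)"
    using False s_ge_2 by (simp add: powr_realpow[symmetric] powr_minus[of _ "of_int j"]
        field_simps)
  then show ?thesis
    using lambda_fun_scale_power by metis
qed

text \<open>On the level set, x powr \<gamma> \<in> [t/\<alpha>, t/\<alpha> + 1/(p^k \<alpha>)] with t = trunc_val x k, and t depends on x
  only through lead_digits x k; the clamping at 1 makes diff_le_powr_diff applicable.\<close>
definition cover_start :: "real \<Rightarrow> nat \<Rightarrow> nat \<Rightarrow> real" where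
  "cover_start \<alpha> k n = (max (real (a_seq p s A n) / real p ^ k / \<alpha>) 1) powr (1 / \<gamma>)"

lemma level_set_cover:
  assumes "1 \<le> x" and "lambda_fun p s A x = \<alpha>"
  shows "x \<in> {cover_start \<alpha> k (lead_digits x k) ..
    cover_start \<alpha> k (lead_digits x k) + 1 / (real p ^ k * \<alpha>)}"
proof -
  define M where "M = max (trunc_val x k / \<alpha>) 1"
  define u where "u = M powr (1 / \<gamma>)"
  have "0 < \<alpha>"
    using lambda_fun_pos assms by blast
  have "0 < \<gamma>"
    using gamma_ge_1 by simp
  have "trunc_val x k \<le> \<alpha> * x powr \<gamma>" "\<alpha> * x powr \<gamma> \<le> trunc_val x k + 1 / real p ^ k"
    using lambda_fun_bounds[OF assms(1), of k] assms(2) by (simp_all add: mult.commute)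
  then have "M \<le> x powr \<gamma>" and "x powr \<gamma> \<le> trunc_val x k / \<alpha> + 1 / (real p ^ k * \<alpha>)"
    using \<open>0 < \<alpha>\<close> \<open>0 < \<gamma>\<close> assms(1) unfolding M_def
    by (auto simp: field_simps ge_one_powr_ge_zero)
  then have "x powr \<gamma> \<le> M + 1 / (real p ^ k * \<alpha>)"
    unfolding M_def by linarith
  have "1 \<le> u" "u powr \<gamma> = M"
    unfolding u_def M_def using \<open>0 < \<gamma>\<close> by (auto simp: ge_one_powr_ge_zero powr_powr)
  have "u \<le> x"
    using powr_mono2[OF _ _ \<open>M \<le> x powr \<gamma>\<close>, of "1 / \<gamma>"] \<open>0 < \<gamma>\<close> assms(1)
    unfolding u_def M_def by (simp add: powr_powr)
  have "x - u \<le> x powr \<gamma> - u powr \<gamma>"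
    by (rule diff_le_powr_diff[OF \<open>1 \<le> u\<close> \<open>u \<le> x\<close> gamma_ge_1])
  moreover have "u = cover_start \<alpha> k (lead_digits x k)"
    unfolding u_def M_def cover_start_def trunc_val_def ..
  ultimately show ?thesis
    using \<open>u \<le> x\<close> \<open>u powr \<gamma> = M\<close> \<open>x powr \<gamma> \<le> M + 1 / (real p ^ k * \<alpha>)\<close> by simp
qed

lemma level_set_unit_negligible: "negligible {x. 1 \<le> x \<and> x < real s \<and> lambda_fun p s A x = \<alpha>}"
  (is "negligible ?S")
proof (cases "0 < \<alpha>")
  case False
  then have "?S = {}"
    using lambda_fun_pos by force
  then show ?thesis
    by (metis negligible_empty)
next
  case True
  show ?thesis
    unfolding negligible_outer_le
  proof (intro allI impI)
    fix e :: real
    assume "0 < e"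
    obtain k where k: "(real s / real p) ^ k < e * \<alpha> / real s"
      using real_arch_pow_inv[of "e * \<alpha> / real s" "real s / real p"] \<open>0 < e\<close> True s_ge_2 s_less_p
      by auto
    define \<delta> where "\<delta> = 1 / (real p ^ k * \<alpha>)"
    define T where "T = (\<Union>n\<in>{s ^ k..<s ^ Suc k}. {cover_start \<alpha> k n .. cover_start \<alpha> k n + \<delta>})"
    have "?S \<subseteq> T"
    proof
      fix x
      assume "x \<in> ?S"
      then have "lead_digits x k \<in> {s ^ k..<s ^ Suc k}"
        using lead_digits_ge lead_digits_less by simp
      then show "x \<in> T"
        using level_set_cover[of x \<alpha> k] \<open>x \<in> ?S\<close> unfolding T_def \<delta>_def by blast
    qed
    moreover have "T \<in> lmeasurable"
      unfolding T_def by auto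
    moreover have "measure lebesgue T \<le> e"
    proof -
      have "measure lebesgue T \<le> real (card {s ^ k..<s ^ Suc k}) * \<delta>"
        unfolding T_def using True by (intro measure_UN_intervals_le) (auto simp: \<delta>_def)
      also have "\<dots> \<le> real (s ^ Suc k) * \<delta>"
        using True by (intro mult_right_mono of_nat_mono) (auto simp: \<delta>_def)
      also have "\<dots> = real s * (real s / real p) ^ k / \<alpha>"
        unfolding \<delta>_def by (simp add: power_divide)
      also have "\<dots> \<le> e"
        using mult_strict_left_mono[OF k, of "real s"] s_ge_2 True by (simp add: divide_le_eq)
      finally show ?thesis .
    qed
    ultimately show "\<exists>T. ?S \<subseteq> T \<and> T \<in> lmeasurable \<and> measure lebesgue T \<le> e"
      by blast
  qed
qed

lemma level_set_negligible: "negligible {x. 0 < x \<and> lambda_fun p s A x = \<alpha>}"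
proof -
  define S where "S = {x. 1 \<le> x \<and> x < real s \<and> lambda_fun p s A x = \<alpha>}"
  have "{x. 0 < x \<and> lambda_fun p s A x = \<alpha>} \<subseteq> (\<Union>j. (\<lambda>z. real s powr of_int j * z) ` S)"
  proof
    fix x :: real
    assume "x \<in> {x. 0 < x \<and> lambda_fun p s A x = \<alpha>}"
    then have "0 < x" "lambda_fun p s A x = \<alpha>"
      by auto
    define j where "j = \<lfloor>log (real s) x\<rfloor>"
    define z where "z = real s powr - of_int j * x"
    have "real s powr of_int j \<le> x" "x < real s powr of_int j * real s"
      using floor_log_eq_powr_iff[of x "real s" j] \<open>0 < x\<close> s_ge_2
      unfolding j_def by (auto simp: powr_add)
    moreover have "z = x / real s powr of_int j"
      unfolding z_def by (simp add: powr_minus divide_inverse)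
    ultimately have "1 \<le> z" "z < real s"
      using s_ge_2 by (simp_all add: le_divide_eq divide_less_eq mult.commute)
    then have "z \<in> S"
      using \<open>lambda_fun p s A x = \<alpha>\<close> lambda_fun_scale_powr_int[of "- j" x]
      unfolding S_def z_def by simp
    moreover have "x = real s powr of_int j * z"
      using s_ge_2 unfolding z_def by (simp add: powr_minus)
    ultimately show "x \<in> (\<Union>j. (\<lambda>z. real s powr of_int j * z) ` S)"
      by blast
  qed
  moreover have "negligible (\<Union>j. (\<lambda>z. real s powr of_int j * z) ` S)"
  proof -
    have "negligible ((\<lambda>z. real s powr of_int j * z) ` S)" for j
      using level_set_unit_negligible unfolding S_def
      by (intro negligible_differentiable_image_negligible) (auto intro!: derivative_intros)
    then show ?thesis
      by (intro negligible_countable_Union) auto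
  qed
  ultimately show ?thesis
    by (rule negligible_subset[rotated])
qed

end

theorem mainTheorem13:
  fixes p s :: nat and A :: "nat set" and \<alpha> :: real
  assumes "p \<ge> 3" and "2 \<le> s" and "s < p"
    and "A \<subseteq> {0..<p}" and "card A = s"
    and "(INF n\<in>{1..}. b_seq p s A n) \<le> \<alpha>"
    and "\<alpha> \<le> (SUP n\<in>{1..}. b_seq p s A n)"
  shows "{x::real. 0 < x \<and> lambda_fun p s A x = \<alpha>} \<in> null_sets lebesgue"
proof -
  interpret digit_setting p s A
    using assms by unfold_locales
  show ?thesis
    using level_set_negligible[of \<alpha>] by (simp add: negligible_iff_null_sets)
qed

end
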